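(* Let $T$ be a tree of order $n\ge 2$ and let $X\in\mathbb R^{V(T)}$ be a vector all of whose entries are non-negative, or all of whose entries are non-positive. Label the vertices $v_1,\dots,v_n$ of $T$ so that $|X_{v_1}|\ge |X_{v_2}|\ge\cdots\ge |X_{v_n}|$, and write $X_i=X_{v_i}$. Then $$\sum_{uv\in E(T)}X_uX_v\ \le\ \sum_{i=2}^n X_1X_i ,$$ where the right-hand side equals $\sum_{uv\in E(K_{1,n-1})}X_uX_v$ for the star $K_{1,n-1}$ on the same vertex set with center $v_1$. If moreover all entries of $X$ are positive (or all are negative) and $|X_1|>|X_2|$, then equality holds only if $T$ is the star $K_{1,n-1}$ with center $v_1$.
   Context: $K_{1,n-1}$ denotes the star of order $n$; its vertex of degree $n-1$ is called the center. *)

theory Defs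
  imports Complex_Main
begin

definition simple_graph :: "'a set \<Rightarrow> 'a set set \<Rightarrow> bool" where
  "simple_graph V E \<longleftrightarrow> finite V \<and>
     (\<forall>e\<in>E. \<exists>u v. u \<in> V \<and> v \<in> V \<and> u \<noteq> v \<and> e = {u, v})"

definition connected_graph :: "'a set \<Rightarrow> 'a set set \<Rightarrow> bool" where
  "connected_graph V E \<longleftrightarrow> (\<forall>u\<in>V. \<forall>v\<in>V. (\<lambda>x y. {x, y} \<in> E)\<^sup>*\<^sup>* u v)"

definition is_cycle :: "'a set set \<Rightarrow> 'a list \<Rightarrow> bool" where
  "is_cycle E cs \<longleftrightarrow> length cs \<ge> 3 \<and> distinct cs \<and>
     (\<forall>i. Suc i < length cs \<longrightarrow> {cs ! i, cs ! Suc i} \<in> E) \<and> {last cs, hd cs} \<in> E"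

definition acyclic_graph :: "'a set set \<Rightarrow> bool" where
  "acyclic_graph E \<longleftrightarrow> \<not> (\<exists>cs. is_cycle E cs)"

definition is_tree :: "'a set \<Rightarrow> 'a set set \<Rightarrow> bool" where
  "is_tree V E \<longleftrightarrow> simple_graph V E \<and> connected_graph V E \<and> acyclic_graph E"

definition star_edges :: "'a set \<Rightarrow> 'a \<Rightarrow> 'a set set" where
  "star_edges V c = {{c, v} | v. v \<in> V \<and> v \<noteq> c}"

end

theory Submission
  imports Defs "HOL-Library.Transitive_Closure_Table"
begin

text \<open>Root the tree at \<open>v\<^sub>1\<close>. Deleting an edge splits the tree in two; call the endpoint
  that is cut off from the root the far end of the edge. Distinct edges have distinct far ends,
  none of which is the root. As all entries have the same sign and \<open>|X|\<close> is largest at the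
  root, the weight \<open>X\<^sub>a X\<^sub>b\<close> of an edge is at most \<open>X\<^sub>1\<close> times the entry at its far
  end, and summing along the injective far-end map bounds the tree sum by the star sum.
  With strict signs and a strict maximum, equality forces the near end of every edge to be
  the root and every other vertex to be a far end, so the tree is the star.\<close>

definition reachable :: "'a set set \<Rightarrow> 'a \<Rightarrow> 'a \<Rightarrow> bool" where
  "reachable F = (\<lambda>x y. {x, y} \<in> F)\<^sup>*\<^sup>*"

lemma reachable_refl [simp]: "reachable F x x"
  by (simp add: reachable_def)

lemma reachable_trans: "reachable F x y \<Longrightarrow> reachable F y z \<Longrightarrow> reachable F x z"
  unfolding reachable_def by (rule rtranclp_trans)

lemma reachable_edge_trans: "reachable F x y \<Longrightarrow> {y, z} \<in> F \<Longrightarrow> reachable F x z"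
  unfolding reachable_def by (rule rtranclp.rtrancl_into_rtrancl)

lemma reachable_sym: "reachable F x y \<Longrightarrow> reachable F y x"
  unfolding reachable_def
proof (induction rule: rtranclp_induct)
  case (step y z)
  have "{z, y} \<in> F"
    using step.hyps(2) by (simp add: insert_commute)
  then show ?case
    using step.IH by (rule converse_rtranclp_into_rtranclp)
qed simp

lemma reachable_mono: "reachable F x y \<Longrightarrow> F \<subseteq> G \<Longrightarrow> reachable G x y"
  unfolding reachable_def by (erule rtranclp_mono[THEN predicate2D, rotated]) auto

lemma connected_graph_iff_reachable:
  "connected_graph V E \<longleftrightarrow> (\<forall>u\<in>V. \<forall>w\<in>V. reachable E u w)"
  by (simp add: connected_graph_def reachable_def)

lemma reachable_remove_edge:
  assumes "reachable F x y"
  shows "reachable (F - {e}) x y \<or> (\<exists>z\<in>e. reachable (F - {e}) x z)"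
  using assms unfolding reachable_def
proof (induction rule: rtranclp_induct)
  case (step y z)
  show ?case
  proof (cases "{y, z} = e")
    case True
    with step.IH show ?thesis by auto
  next
    case False
    with step.hyps(2) have "{y, z} \<in> F - {e}" by blast
    with step.IH show ?thesis by (meson rtranclp.rtrancl_into_rtrancl)
  qed
qed simp

lemma acyclic_edge_is_bridge:
  assumes "acyclic_graph F" "{a, b} \<in> F" "a \<noteq> b"
  shows "\<not> reachable (F - {{a, b}}) a b"
proof
  assume "reachable (F - {{a, b}}) a b"
  then obtain xs where path: "rtrancl_path (\<lambda>x y. {x, y} \<in> F - {{a, b}}) a xs b"
    and dist: "distinct (a # xs)"
    unfolding reachable_def rtranclp_eq_rtrancl_path by (auto elim: rtrancl_path_distinct)
  have "xs \<noteq> []"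
    using path \<open>a \<noteq> b\<close> by cases auto
  have last: "last xs = b" using path \<open>xs \<noteq> []\<close> by (rule rtrancl_path_last)
  have "length xs \<ge> 2"
  proof (rule ccontr)
    assume "\<not> length xs \<ge> 2"
    with \<open>xs \<noteq> []\<close> have "xs = [last xs]" by (cases xs) (auto simp: Suc_le_eq)
    with last have "xs = [b]" by simp
    with path show False by cases auto
  qed
  have "is_cycle F (a # xs)"
    unfolding is_cycle_def
  proof (intro conjI allI impI)
    fix i assume "Suc i < length (a # xs)"
    then show "{(a # xs) ! i, (a # xs) ! Suc i} \<in> F"
      using rtrancl_path_nth[OF path, of i] by simp
  qed (use \<open>length xs \<ge> 2\<close> dist last \<open>xs \<noteq> []\<close> assms(2) insert_commute[of b a "{}"] in auto)
  with assms(1) show False unfolding acyclic_graph_def by blast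
qed

lemma sum_star_edges:
  fixes X :: "'a \<Rightarrow> 'b::comm_ring_1"
  shows "(\<Sum>e\<in>star_edges V c. \<Prod>x\<in>e. X x) = (\<Sum>u\<in>V - {c}. X c * X u)"
proof -
  have "star_edges V c = (\<lambda>u. {c, u}) ` (V - {c})"
    unfolding star_edges_def by auto
  moreover have "inj_on (\<lambda>u. {c, u}) (V - {c})"
    by (rule inj_onI) (auto simp: doubleton_eq_iff)
  ultimately have "(\<Sum>e\<in>star_edges V c. \<Prod>x\<in>e. X x) = (\<Sum>u\<in>V - {c}. \<Prod>x\<in>{c, u}. X x)"
    by (simp add: sum.reindex)
  also have "\<dots> = (\<Sum>u\<in>V - {c}. X c * X u)"
    by (rule sum.cong) auto
  finally show ?thesis .
qed

lemma prod_edge: "e = {a, b} \<Longrightarrow> a \<noteq> b \<Longrightarrow> prod f e = f a * f b"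
  by simp

locale rooted_tree =
  fixes V :: "'a set" and E :: "'a set set" and r :: 'a
  assumes tree: "is_tree V E" and root: "r \<in> V"
begin

lemma finite_vertices: "finite V"
  using tree by (simp add: is_tree_def simple_graph_def)

lemma edge_cases: "e \<in> E \<Longrightarrow> \<exists>a b. a \<in> V \<and> b \<in> V \<and> a \<noteq> b \<and> e = {a, b}"
  using tree by (auto simp: is_tree_def simple_graph_def)

lemma finite_edges: "finite E"
proof (rule finite_subset)
  show "E \<subseteq> Pow V" using edge_cases by blast
qed (simp add: finite_vertices)

lemma reachable_from_root: "u \<in> V \<Longrightarrow> reachable E r u"
  using tree root by (simp add: is_tree_def connected_graph_iff_reachable)

text \<open>Removing an edge of the tree leaves exactly one of its endpoints connected to the root,
  so the description below is unique.\<close>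

definition far_end :: "'a set \<Rightarrow> 'a" where
  "far_end e = (THE u. u \<in> e \<and> \<not> reachable (E - {e}) r u)"

lemma edge_far_end:
  assumes "e \<in> E"
  obtains w where "e = {far_end e, w}" "far_end e \<noteq> w" "far_end e \<in> V" "w \<in> V"
    "\<not> reachable (E - {e}) r (far_end e)" "reachable (E - {e}) r w"
proof -
  obtain a b where ab: "a \<in> V" "b \<in> V" "a \<noteq> b" "e = {a, b}"
    using edge_cases[OF assms] by blast
  have some_end: "reachable (E - {e}) r a \<or> reachable (E - {e}) r b"
    using reachable_remove_edge[OF reachable_from_root[OF \<open>a \<in> V\<close>], of e] ab(4) by auto
  have not_both: "\<not> (reachable (E - {e}) r a \<and> reachable (E - {e}) r b)"
  proof
    assume "reachable (E - {e}) r a \<and> reachable (E - {e}) r b"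
    then have "reachable (E - {e}) a b"
      by (meson reachable_sym reachable_trans)
    moreover have "acyclic_graph E"
      using tree by (simp add: is_tree_def)
    ultimately show False
      using acyclic_edge_is_bridge[of E a b] assms ab(3,4) by blast
  qed
  show thesis
  proof (cases "reachable (E - {e}) r a")
    case False
    with some_end have "reachable (E - {e}) r b" by blast
    moreover have "far_end e = a"
      unfolding far_end_def using False calculation ab(4) by (intro the_equality) auto
    ultimately show thesis
      using ab False by (intro that[of b]) simp_all
  next
    case True
    with not_both have "\<not> reachable (E - {e}) r b" by blast
    moreover have "far_end e = b"
      unfolding far_end_def using True calculation ab(4) by (intro the_equality) auto
    moreover have "e = {b, a}"
      using ab(4) by blast
    ultimately show thesis
      using ab(1-3) True by (intro that[of a]) simp_all
  qed
qed

lemma far_end_in_nonroot: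
  assumes "e \<in> E"
  shows "far_end e \<in> V - {r}"
proof -
  obtain w where "far_end e \<in> V" "\<not> reachable (E - {e}) r (far_end e)"
    using edge_far_end[OF assms] by metis
  then show ?thesis by auto
qed

lemma inj_on_far_end: "inj_on far_end E"
proof (rule inj_onI)
  fix e1 e2 assume e1: "e1 \<in> E" and e2: "e2 \<in> E" and same: "far_end e1 = far_end e2"
  show "e1 = e2"
  proof (rule ccontr)
    assume "e1 \<noteq> e2"
    obtain w1 where w1: "e1 = {far_end e1, w1}" "\<not> reachable (E - {e1}) r (far_end e1)"
      by (rule edge_far_end[OF e1])
    obtain w2 where w2: "e2 = {far_end e2, w2}" "\<not> reachable (E - {e2}) r (far_end e2)"
      "reachable (E - {e2}) r w2"
      by (rule edge_far_end[OF e2])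
    define u where "u = far_end e1"
    note w1 = w1[folded u_def] and w2 = w2[folded same, folded u_def]
    have "{w2, u} \<in> E - {e1}" "{w1, u} \<in> E - {e2}"
      using e1 e2 \<open>e1 \<noteq> e2\<close> w1(1) w2(1) by (simp_all add: insert_commute)
    then have "\<not> reachable (E - {e1}) r w2" "\<not> reachable (E - {e2}) r w1"
      using w1(2) w2(2) by (meson reachable_edge_trans)+
    moreover have "E - {e2} - {e1} \<subseteq> E - {e1}" "E - {e2} - {e1} \<subseteq> E - {e2}"
      by auto
    ultimately have "\<not> reachable (E - {e2} - {e1}) r z" if "z \<in> {w2, u, w1}" for z
      using that w1(2) reachable_mono[of "E - {e2} - {e1}" r z] by blast
    moreover have "\<exists>z\<in>{w2, u, w1}. reachable (E - {e2} - {e1}) r z"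
      using reachable_remove_edge[OF w2(3), of e1] w1(1) by auto
    ultimately show False by blast
  qed
qed

context
  fixes X :: "'a \<Rightarrow> 'b::linordered_idom"
begin

lemma edge_weight_le_far_end_weight:
  assumes same_sign: "\<forall>u\<in>V. \<forall>w\<in>V. 0 \<le> X u * X w"
    and root_max: "\<forall>u\<in>V. \<bar>X u\<bar> \<le> \<bar>X r\<bar>"
    and "e \<in> E"
  shows "(\<Prod>x\<in>e. X x) \<le> X r * X (far_end e)"
proof -
  obtain w where w: "e = {far_end e, w}" "far_end e \<noteq> w" "far_end e \<in> V" "w \<in> V"
    using edge_far_end[OF \<open>e \<in> E\<close>] by metis
  have "(\<Prod>x\<in>e. X x) = \<bar>X (far_end e) * X w\<bar>"
    using prod_edge[OF w(1,2)] w(3,4) same_sign by simp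
  also have "\<dots> \<le> \<bar>X (far_end e)\<bar> * \<bar>X r\<bar>"
    using root_max w by (simp add: abs_mult mult_left_mono)
  also have "\<dots> = X r * X (far_end e)"
    using same_sign w root by (metis abs_mult abs_of_nonneg mult.commute)
  finally show ?thesis .
qed

lemma sum_edges_le_sum_far_ends:
  assumes "\<forall>u\<in>V. \<forall>w\<in>V. 0 \<le> X u * X w" "\<forall>u\<in>V. \<bar>X u\<bar> \<le> \<bar>X r\<bar>"
  shows "(\<Sum>e\<in>E. \<Prod>x\<in>e. X x) \<le> (\<Sum>u\<in>far_end ` E. X r * X u)"
proof -
  have "(\<Sum>e\<in>E. \<Prod>x\<in>e. X x) \<le> (\<Sum>e\<in>E. X r * X (far_end e))"
    by (rule sum_mono) (rule edge_weight_le_far_end_weight[OF assms])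
  then show ?thesis
    by (simp add: sum.reindex inj_on_far_end)
qed

lemma sum_far_ends_le_star:
  assumes "\<forall>u\<in>V. \<forall>w\<in>V. 0 \<le> X u * X w"
  shows "(\<Sum>u\<in>far_end ` E. X r * X u) \<le> (\<Sum>u\<in>V - {r}. X r * X u)"
  using assms far_end_in_nonroot root finite_vertices by (intro sum_mono2) auto

lemma sum_edges_le_star:
  assumes "\<forall>u\<in>V. \<forall>w\<in>V. 0 \<le> X u * X w" "\<forall>u\<in>V. \<bar>X u\<bar> \<le> \<bar>X r\<bar>"
  shows "(\<Sum>e\<in>E. \<Prod>x\<in>e. X x) \<le> (\<Sum>u\<in>V - {r}. X r * X u)"
  using sum_edges_le_sum_far_ends[OF assms] sum_far_ends_le_star[OF assms(1)] by (rule order_trans)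

lemma eq_star_edges_if_sum_eq:
  assumes pos: "\<forall>u\<in>V. \<forall>w\<in>V. 0 < X u * X w"
    and root_strict_max: "\<forall>u\<in>V - {r}. \<bar>X u\<bar> < \<bar>X r\<bar>"
    and eq: "(\<Sum>e\<in>E. \<Prod>x\<in>e. X x) = (\<Sum>u\<in>V - {r}. X r * X u)"
  shows "E = star_edges V r"
proof -
  have same_sign: "\<forall>u\<in>V. \<forall>w\<in>V. 0 \<le> X u * X w"
    using pos by (auto intro: less_imp_le)
  have root_max: "\<forall>u\<in>V. \<bar>X u\<bar> \<le> \<bar>X r\<bar>"
    using root_strict_max by (metis DiffI less_imp_le order_refl singletonD)
  have eq_edges: "(\<Sum>e\<in>E. \<Prod>x\<in>e. X x) = (\<Sum>e\<in>E. X r * X (far_end e))"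
   and eq_far_ends: "(\<Sum>u\<in>far_end ` E. X r * X u) = (\<Sum>u\<in>V - {r}. X r * X u)"
    using eq sum_edges_le_sum_far_ends[OF same_sign root_max] sum_far_ends_le_star[OF same_sign]
    by (auto simp: sum.reindex inj_on_far_end)
  have edge_at_root: "e = {r, far_end e}" if "e \<in> E" for e
  proof -
    obtain w where w: "e = {far_end e, w}" "far_end e \<noteq> w" "far_end e \<in> V" "w \<in> V"
      using edge_far_end[OF \<open>e \<in> E\<close>] by metis
    have "X (far_end e) * X w = X r * X (far_end e)"
      using sum_mono_inv[OF eq_edges edge_weight_le_far_end_weight[OF same_sign root_max]
          \<open>e \<in> E\<close> finite_edges] prod_edge[OF w(1,2), of X]
      by simp
    moreover have "X (far_end e) \<noteq> 0"
      using pos w(3) by fastforce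
    ultimately have "X w = X r"
      by (metis mult.commute mult_cancel_left)
    have "w = r"
    proof (rule ccontr)
      assume "w \<noteq> r"
      with root_strict_max w(4) have "\<bar>X w\<bar> < \<bar>X r\<bar>" by blast
      with \<open>X w = X r\<close> show False by simp
    qed
    with w show ?thesis by auto
  qed
  have "far_end ` E \<subseteq> V - {r}"
    using far_end_in_nonroot by (rule image_subsetI)
  then have "(\<Sum>u\<in>V - {r} - far_end ` E. X r * X u) = 0"
    using eq_far_ends sum.subset_diff[of "far_end ` E" "V - {r}" "\<lambda>u. X r * X u"] finite_vertices
    by simp
  then have no_gap: "X r * X u = 0" if "u \<in> V - {r} - far_end ` E" for u
    using that finite_vertices pos root sum_nonneg_eq_0_iff[of "V - {r} - far_end ` E"]
    by (meson DiffD1 finite_Diff less_imp_le)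
  have cover: "V - {r} \<subseteq> far_end ` E"
  proof
    fix u assume u: "u \<in> V - {r}"
    show "u \<in> far_end ` E"
    proof (rule ccontr)
      assume "u \<notin> far_end ` E"
      with u have "X r * X u = 0" by (intro no_gap) blast
      moreover have "0 < X r * X u" using pos root u by blast
      ultimately show False by (metis less_irrefl)
    qed
  qed
  have "star_edges V r \<subseteq> E"
  proof
    fix s assume "s \<in> star_edges V r"
    then obtain u where "u \<in> V - {r}" "s = {r, u}"
      unfolding star_edges_def by blast
    with cover obtain e where "e \<in> E" "s = {r, far_end e}" by blast
    then show "s \<in> E" by (metis edge_at_root)
  qed
  moreover have "E \<subseteq> star_edges V r"
  proof
    fix e assume "e \<in> E"
    then show "e \<in> star_edges V r"
      unfolding star_edges_def using edge_at_root[OF \<open>e \<in> E\<close>] far_end_in_nonroot[OF \<open>e \<in> E\<close>]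
      by blast
  qed
  ultimately show ?thesis by blast
qed

end

end

theorem lemma3p1:
  fixes V :: "'a set" and E :: "'a set set" and X :: "'a \<Rightarrow> real"
    and v :: "nat \<Rightarrow> 'a" and n :: nat
  assumes tree: "is_tree V E"
    and n: "card V = n" "n \<ge> 2"
    and sign: "(\<forall>u\<in>V. X u \<ge> 0) \<or> (\<forall>u\<in>V. X u \<le> 0)"
    and lab: "bij_betw v {1..n} V"
    and sorted: "\<forall>i j. 1 \<le> i \<and> i \<le> j \<and> j \<le> n \<longrightarrow> \<bar>X (v j)\<bar> \<le> \<bar>X (v i)\<bar>"
  shows "(\<Sum>e\<in>E. \<Prod>x\<in>e. X x) \<le> (\<Sum>i=2..n. X (v 1) * X (v i))
    \<and> (\<Sum>i=2..n. X (v 1) * X (v i)) = (\<Sum>e\<in>star_edges V (v 1). \<Prod>x\<in>e. X x)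
    \<and> (((\<forall>u\<in>V. X u > 0) \<or> (\<forall>u\<in>V. X u < 0)) \<and> \<bar>X (v 1)\<bar> > \<bar>X (v 2)\<bar>
        \<and> (\<Sum>e\<in>E. \<Prod>x\<in>e. X x) = (\<Sum>i=2..n. X (v 1) * X (v i))
        \<longrightarrow> E = star_edges V (v 1))"
proof -
  have labels: "V = v ` {1..n}"
    using lab by (simp add: bij_betw_def)
  then interpret rooted_tree V E "v 1"
    using tree n(2) by unfold_locales auto
  have same_sign: "\<forall>u\<in>V. \<forall>w\<in>V. 0 \<le> X u * X w"
    using sign by (auto simp: zero_le_mult_iff)
  have root_max: "\<forall>u\<in>V. \<bar>X u\<bar> \<le> \<bar>X (v 1)\<bar>"
  proof
    fix u assume "u \<in> V"
    then obtain i where "i \<in> {1..n}" "u = v i" using labels by blast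
    then show "\<bar>X u\<bar> \<le> \<bar>X (v 1)\<bar>" using sorted by simp
  qed
  have star_sum: "(\<Sum>i=2..n. X (v 1) * X (v i)) = (\<Sum>u\<in>V - {v 1}. X (v 1) * X u)"
  proof -
    have "bij_betw v ({1..n} - {1}) (V - {v 1})"
      using lab n(2) by (intro bij_betw_DiffI) (auto simp: bij_betw_def)
    moreover have "{1..n} - {1} = {2..n}" by auto
    ultimately have "bij_betw v {2..n} (V - {v 1})" by simp
    then show ?thesis
      by (rule sum.reindex_bij_betw)
  qed
  have equality_case: "E = star_edges V (v 1)"
    if pos: "(\<forall>u\<in>V. X u > 0) \<or> (\<forall>u\<in>V. X u < 0)" and gap: "\<bar>X (v 1)\<bar> > \<bar>X (v 2)\<bar>"
      and eq: "(\<Sum>e\<in>E. \<Prod>x\<in>e. X x) = (\<Sum>i=2..n. X (v 1) * X (v i))"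
  proof (rule eq_star_edges_if_sum_eq)
    show "\<forall>u\<in>V. \<forall>w\<in>V. 0 < X u * X w"
      using pos by (auto simp: zero_less_mult_iff)
    show "\<forall>u\<in>V - {v 1}. \<bar>X u\<bar> < \<bar>X (v 1)\<bar>"
    proof
      fix u assume "u \<in> V - {v 1}"
      then obtain i where "i \<in> {1..n}" "i \<noteq> 1" "u = v i"
        using labels by blast
      then have "\<bar>X u\<bar> \<le> \<bar>X (v 2)\<bar>"
        using sorted by simp
      with gap show "\<bar>X u\<bar> < \<bar>X (v 1)\<bar>" by linarith
    qed
  qed (use eq star_sum in simp)
  moreover have "(\<Sum>e\<in>E. \<Prod>x\<in>e. X x) \<le> (\<Sum>i=2..n. X (v 1) * X (v i))"
    using sum_edges_le_star[OF same_sign root_max] star_sum by simp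
  moreover have "(\<Sum>i=2..n. X (v 1) * X (v i)) = (\<Sum>e\<in>star_edges V (v 1). \<Prod>x\<in>e. X x)"
    using star_sum by (simp add: sum_star_edges)
  ultimately show ?thesis by blast
qed

end
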